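(* Let $A$ be a predicate and $(\rho_i)_i$ a family of mixed memories with $\rho_i\models A$ for all $i$ such that $\sum_i\rho_i$ exists. Then $\sum_i\rho_i\models A$.
   Context: Variables are program variables, entangled ghosts or unentangled ghosts. $\ell^2[V]$ is the Hilbert space with orthonormal basis indexed by assignments on $V$; mixed memories over $V$ are positive trace-class operators on $\ell^2[V]$; $\mathrm{tr}_W$ is partial trace; $\mathrm{supp}\,\rho$ is the closure of the range of $\rho$. A mixed memory over $V\cup W$ is $(V,W)$-separable if it is a convergent sum $\sum_i\rho_i\otimes\rho_i'$ of mixed memories over $V$ and $W$. A predicate over $V$ is a closed subspace of $\ell^2[V]$. For program variables $X$, entangled ghosts $E$, unentangled ghosts $U$ and a predicate $A$ over $X\cup E\cup U$, a mixed memory $\rho$ over $X$ satisfies $A$ ($\rho\models A$) iff there exists an $(X\cup E,U)$-separable mixed memory $\rho^\circ$ over $X\cup E\cup U$ with $\mathrm{supp}\,\rho^\circ\subseteq A$ and $\mathrm{tr}_{E\cup U}\rho^\circ=\rho$. *)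

theory Defs
  imports "HOL-Analysis.Analysis"
begin

text \<open>Assignments on a set of variables are represented by the elements of a type.
  Vectors of the Hilbert space l2 over a type are square-summable complex functions;
  operators (mixed memories) are represented by their matrices in the canonical
  orthonormal basis.\<close>

definition l2 :: "('a \<Rightarrow> complex) set" where
  "l2 = {f. (\<lambda>x. (cmod (f x))^2) summable_on UNIV}"

definition l2_norm :: "('a \<Rightarrow> complex) \<Rightarrow> real" where
  "l2_norm f = sqrt (\<Sum>\<^sub>\<infinity>x. (cmod (f x))^2)"

definition l2_closure :: "('a \<Rightarrow> complex) set \<Rightarrow> ('a \<Rightarrow> complex) set" where
  "l2_closure S = {f \<in> l2. \<exists>F. (\<forall>n. F n \<in> S) \<and>
       (\<lambda>n. l2_norm (\<lambda>x. F n x - f x)) \<longlonglongrightarrow> 0}"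

definition is_predicate :: "('a \<Rightarrow> complex) set \<Rightarrow> bool" where
  "is_predicate A \<longleftrightarrow> A \<subseteq> l2 \<and> (\<lambda>x. 0) \<in> A
     \<and> (\<forall>f\<in>A. \<forall>g\<in>A. (\<lambda>x. f x + g x) \<in> A)
     \<and> (\<forall>c. \<forall>f\<in>A. (\<lambda>x. c * f x) \<in> A)
     \<and> l2_closure A \<subseteq> A"

definition positive_matrix :: "('a \<Rightarrow> 'a \<Rightarrow> complex) \<Rightarrow> bool" where
  "positive_matrix \<rho> \<longleftrightarrow> (\<forall>F c. finite F \<longrightarrow>
     Im (\<Sum>x\<in>F. \<Sum>y\<in>F. cnj (c x) * \<rho> x y * c y) = 0 \<and>
     Re (\<Sum>x\<in>F. \<Sum>y\<in>F. cnj (c x) * \<rho> x y * c y) \<ge> 0)"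

text \<open>Mixed memory: positive trace-class operator (positive with summable diagonal).\<close>
definition mixed_memory :: "('a \<Rightarrow> 'a \<Rightarrow> complex) \<Rightarrow> bool" where
  "mixed_memory \<rho> \<longleftrightarrow> positive_matrix \<rho> \<and> (\<lambda>x. Re (\<rho> x x)) summable_on UNIV"

definition mm_has_sum :: "('i \<Rightarrow> 'a \<Rightarrow> 'a \<Rightarrow> complex) \<Rightarrow> 'i set \<Rightarrow> ('a \<Rightarrow> 'a \<Rightarrow> complex) \<Rightarrow> bool" where
  "mm_has_sum \<rho> I \<sigma> \<longleftrightarrow> mixed_memory \<sigma> \<and> (\<forall>x y. ((\<lambda>i. \<rho> i x y) has_sum \<sigma> x y) I)"

definition mm_apply :: "('a \<Rightarrow> 'a \<Rightarrow> complex) \<Rightarrow> ('a \<Rightarrow> complex) \<Rightarrow> ('a \<Rightarrow> complex)" where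
  "mm_apply \<rho> \<psi> = (\<lambda>x. \<Sum>\<^sub>\<infinity>y. \<rho> x y * \<psi> y)"

definition supp :: "('a \<Rightarrow> 'a \<Rightarrow> complex) \<Rightarrow> ('a \<Rightarrow> complex) set" where
  "supp \<rho> = l2_closure (mm_apply \<rho> ` l2)"

definition tensor :: "('v \<Rightarrow> 'v \<Rightarrow> complex) \<Rightarrow> ('w \<Rightarrow> 'w \<Rightarrow> complex) \<Rightarrow> ('v \<times> 'w \<Rightarrow> 'v \<times> 'w \<Rightarrow> complex)" where
  "tensor \<rho> \<sigma> = (\<lambda>(v, w) (v', w'). \<rho> v v' * \<sigma> w w')"

definition separable :: "('v \<times> 'w \<Rightarrow> 'v \<times> 'w \<Rightarrow> complex) \<Rightarrow> bool" where
  "separable \<rho> \<longleftrightarrow> (\<exists>(\<rho>s :: nat \<Rightarrow> 'v \<Rightarrow> 'v \<Rightarrow> complex) (\<sigma>s :: nat \<Rightarrow> 'w \<Rightarrow> 'w \<Rightarrow> complex).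
      (\<forall>i. mixed_memory (\<rho>s i) \<and> mixed_memory (\<sigma>s i)) \<and>
      mm_has_sum (\<lambda>i. tensor (\<rho>s i) (\<sigma>s i)) UNIV \<rho>)"

text \<open>Partial trace over the entangled and unentangled ghosts E \<union> U.\<close>
definition ptrace_EU :: "((('x \<times> 'e) \<times> 'u) \<Rightarrow> (('x \<times> 'e) \<times> 'u) \<Rightarrow> complex) \<Rightarrow> 'x \<Rightarrow> 'x \<Rightarrow> complex" where
  "ptrace_EU \<rho> = (\<lambda>x x'. \<Sum>\<^sub>\<infinity>(e, u). \<rho> ((x, e), u) ((x', e), u))"

text \<open>Satisfaction; 'x, 'e, 'u are the assignments on X, E, U.\<close>
definition satisfies :: "('x \<Rightarrow> 'x \<Rightarrow> complex) \<Rightarrow> ((('x \<times> 'e) \<times> 'u) \<Rightarrow> complex) set \<Rightarrow> bool" where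
  "satisfies \<rho> A \<longleftrightarrow> (\<exists>\<rho>o :: (('x \<times> 'e) \<times> 'u) \<Rightarrow> (('x \<times> 'e) \<times> 'u) \<Rightarrow> complex.
      mixed_memory \<rho>o \<and> separable \<rho>o \<and> supp \<rho>o \<subseteq> A \<and> ptrace_EU \<rho>o = \<rho>)"

end

(*
  Choose for every i a separable witness R i of the satisfaction of A by \<rho> i. Partial traces
  preserve traces, so the traces of the R i add up to the trace of \<sigma>; positivity bounds every
  entry by the diagonal, hence \<Omega> = \<Sum>i R i converges absolutely entrywise, is again a mixed
  memory, and its partial trace is \<Sum>i \<rho> i = \<sigma>.

  \<Omega> is separable although the index set may be uncountable: the tensor summands of all the R i
  together still sum to \<Omega>, and only countably many of them are nonzero, because a nonzero
  summand has a positive diagonal entry at one of the countably many points where \<Omega> has one.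

  Finally, for \<psi> in l2, \<Omega> \<psi> is the l2-limit of finite partial sums \<Sum>i\<in>G R i \<psi>, which lie in A.
  The error is the tail operator applied to \<psi>, whose norm is bounded by the square root of its
  trace times a constant depending on \<psi>; as A is closed, \<Omega> \<psi> \<in> A.
*)

theory Submission
  imports Defs
begin

section \<open>Infinite sums\<close>

lemma has_sum_sum:
  fixes f :: "'j \<Rightarrow> 'i \<Rightarrow> 'b::topological_comm_monoid_add"
  assumes "finite F" "\<And>j. j \<in> F \<Longrightarrow> (f j has_sum s j) I"
  shows "((\<lambda>i. \<Sum>j\<in>F. f j i) has_sum (\<Sum>j\<in>F. s j)) I"
  using assms by (induction F rule: finite_induct) (auto intro: has_sum_add)

lemma has_sum_Sigma_nonneg:
  fixes f :: "'a \<Rightarrow> 'b \<Rightarrow> real"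
  assumes f: "\<And>x. ((\<lambda>y. f x y) has_sum g x) UNIV" and g: "(g has_sum s) UNIV"
    and nonneg: "\<And>x y. 0 \<le> f x y"
  shows "((\<lambda>(x, y). f x y) has_sum s) UNIV"
proof -
  have sum: "(\<lambda>(x, y). f x y) summable_on Sigma UNIV (\<lambda>_. UNIV)"
    by (rule summable_on_SigmaI[where g = g]) (use f has_sum_imp_summable[OF g] nonneg in auto)
  have "((\<lambda>(x, y). f x y) has_sum s) (Sigma UNIV (\<lambda>_. UNIV))"
    by (rule has_sum_SigmaI[OF _ g sum]) (simp add: f)
  then show ?thesis by simp
qed

lemma has_sum_restrict_finite:
  fixes f :: "'i \<Rightarrow> 'b::topological_ab_group_add"
  assumes "(f has_sum s) UNIV" and "finite G"
  shows "((\<lambda>i. if i \<in> G then 0 else f i) has_sum s - sum f G) UNIV"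
proof -
  have "(f has_sum s - sum f G) (UNIV - G)"
    by (rule has_sum_Diff[OF assms(1)]) (use assms(2) in auto)
  then show ?thesis by (rule has_sum_cong_neutral[THEN iffD1, rotated -1]) auto
qed

lemma has_sum_finite_subsets_seq:
  fixes f :: "'a \<Rightarrow> 'b::{comm_monoid_add, metric_space}"
  assumes "(f has_sum s) A"
  obtains G where "\<And>n. finite (G n)" and "\<And>n. G n \<subseteq> A" and "(\<lambda>n. sum f (G n)) \<longlonglongrightarrow> s"
proof -
  have "\<exists>X. finite X \<and> X \<subseteq> A \<and> dist (sum f X) s < inverse (real (Suc n))" for n
  proof -
    have "\<forall>\<^sub>F X in finite_subsets_at_top A. dist (sum f X) s < inverse (real (Suc n))"
      using assms unfolding has_sum_def by (rule tendstoD) simp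
    then show ?thesis unfolding eventually_finite_subsets_at_top by blast
  qed
  then obtain G where G: "\<And>n. finite (G n)" "\<And>n. G n \<subseteq> A"
    and near: "\<And>n. dist (sum f (G n)) s < inverse (real (Suc n))"
    by metis
  have "(\<lambda>n. dist (sum f (G n)) s) \<longlonglongrightarrow> 0"
    by (rule Lim_null_comparison[OF _ LIMSEQ_inverse_real_of_nat])
      (use near in \<open>auto intro!: always_eventually less_imp_le\<close>)
  then have "(\<lambda>n. sum f (G n)) \<longlonglongrightarrow> s" by (rule tendsto_dist_iff[THEN iffD2])
  with G show ?thesis by (rule that)
qed

section \<open>Positive matrices\<close>

lemma nonneg_quadratic_imp_le:
  fixes p q u :: real
  assumes quad: "\<And>s. 0 \<le> p * s\<^sup>2 - 2 * u * s + q * u"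
    and "0 \<le> p" "0 \<le> q" "0 \<le> u"
  shows "u \<le> p * q"
proof (cases "u = 0")
  case False
  then have "0 < u" using \<open>0 \<le> u\<close> by simp
  show ?thesis
  proof (cases "p = 0")
    case True
    have "0 \<le> - u * (q + 2)" using quad[of "q + 1"] True by (simp add: algebra_simps)
    then show ?thesis using \<open>0 < u\<close> \<open>0 \<le> q\<close> by (simp add: mult_le_0_iff)
  next
    case False
    then have "0 < p" using \<open>0 \<le> p\<close> by simp
    have "0 \<le> p * (u / p)\<^sup>2 - 2 * u * (u / p) + q * u" by (rule quad)
    also have "\<dots> = u * (p * q - u) / p" using \<open>0 < p\<close> by (simp add: field_simps power2_eq_square)
    finally show ?thesis using \<open>0 < u\<close> \<open>0 < p\<close> by (simp add: zero_le_divide_iff zero_le_mult_iff)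
  qed
qed (use assms in simp)

lemma positive_matrixD:
  assumes "positive_matrix T" "finite F"
  shows "Im (\<Sum>x\<in>F. \<Sum>y\<in>F. cnj (c x) * T x y * c y) = 0"
    and "0 \<le> Re (\<Sum>x\<in>F. \<Sum>y\<in>F. cnj (c x) * T x y * c y)"
  using assms unfolding positive_matrix_def by auto

lemma positive_matrix_diag:
  assumes "positive_matrix T"
  shows "T a a = of_real (Re (T a a))" and "0 \<le> Re (T a a)"
  using positive_matrixD[OF assms, of "{a}" "\<lambda>_. 1"] by (auto simp: complex_eq_iff)

lemma positive_matrix_entry_le:
  assumes T: "positive_matrix T"
  shows "cmod (T a b) \<le> sqrt (Re (T a a)) * sqrt (Re (T b b))"
proof (cases "a = b")
  case True
  have "cmod (T a a) = Re (T a a)"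
    by (subst positive_matrix_diag(1)[OF T]) (simp add: positive_matrix_diag(2)[OF T])
  then show ?thesis using True positive_matrix_diag(2)[OF T, of a] by simp
next
  case False
  define p q where "p = Re (T a a)" and "q = Re (T b b)"
  define z w where "z = T a b" and "w = T b a"
  have p: "T a a = of_real p" "0 \<le> p" and q: "T b b = of_real q" "0 \<le> q"
    using positive_matrix_diag[OF T] unfolding p_def q_def by auto
  define form where "form \<alpha> \<beta> = cnj \<alpha> * p * \<alpha> + cnj \<alpha> * z * \<beta> + cnj \<beta> * w * \<alpha> + cnj \<beta> * q * \<beta>"
    for \<alpha> \<beta> :: complex
  have form: "Im (form \<alpha> \<beta>) = 0 \<and> 0 \<le> Re (form \<alpha> \<beta>)" for \<alpha> \<beta>
  proof -
    define c where "c x = (if x = a then \<alpha> else \<beta>)" for x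
    have "(\<Sum>x\<in>{a,b}. \<Sum>y\<in>{a,b}. cnj (c x) * T x y * c y) = form \<alpha> \<beta>"
      using False by (simp add: c_def form_def p q z_def w_def)
    then show ?thesis using positive_matrixD[OF T, of "{a,b}" c] by simp
  qed
  have "w = cnj z"
    using form[of 1 1] form[of 1 \<i>] by (simp add: form_def complex_eq_iff)
  \<comment> \<open>testing the form on \<open>(s, - cnj z)\<close> yields a real quadratic in \<open>s\<close>\<close>
  have "0 \<le> p * s\<^sup>2 - 2 * (cmod z)\<^sup>2 * s + q * (cmod z)\<^sup>2" for s
  proof -
    have "Re (form s (- cnj z)) = p * s\<^sup>2 - 2 * (cmod z)\<^sup>2 * s + q * (cmod z)\<^sup>2"
      unfolding cmod_power2 by (simp add: form_def \<open>w = cnj z\<close> power2_eq_square algebra_simps)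
    then show ?thesis using form by metis
  qed
  then have "(cmod z)\<^sup>2 \<le> p * q" using p q by (intro nonneg_quadratic_imp_le) auto
  then have "cmod z \<le> sqrt (p * q)" by (simp add: real_le_rsqrt)
  then show ?thesis by (simp add: z_def p_def q_def real_sqrt_mult)
qed

lemma positive_matrix_entry_le_mean:
  assumes T: "positive_matrix T"
  shows "cmod (T a b) \<le> (Re (T a a) + Re (T b b)) / 2"
  using positive_matrix_entry_le[OF T, of a b]
    arith_geo_mean_sqrt[OF positive_matrix_diag(2)[OF T] positive_matrix_diag(2)[OF T], of a b]
  by (simp add: real_sqrt_mult)

lemma positive_matrix_has_sum:
  fixes X :: "'i \<Rightarrow> 'a \<Rightarrow> 'a \<Rightarrow> complex"
  assumes X: "\<And>i. i \<in> I \<Longrightarrow> positive_matrix (X i)"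
    and T: "\<And>a b. ((\<lambda>i. X i a b) has_sum T a b) I"
  shows "positive_matrix T"
  unfolding positive_matrix_def
proof (intro allI impI conjI)
  fix F :: "'a set" and c :: "'a \<Rightarrow> complex"
  assume F: "finite F"
  define form where "form M = (\<Sum>x\<in>F. \<Sum>y\<in>F. cnj (c x) * M x y * c y)" for M
  have form: "((\<lambda>i. form (X i)) has_sum form T) I"
    unfolding form_def by (intro has_sum_sum F has_sum_cmult_left has_sum_cmult_right T)
  have "((\<lambda>i. Im (form (X i))) has_sum 0) I"
    by (rule has_sum_0) (use positive_matrixD(1)[OF X F] in \<open>simp add: form_def\<close>)
  then show "Im (form T) = 0"
    using has_sum_Im[OF form] has_sum_unique by blast
  show "0 \<le> Re (form T)"
    by (rule has_sum_nonneg[OF has_sum_Re[OF form]])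
      (use positive_matrixD(2)[OF X F] in \<open>simp add: form_def\<close>)
qed

section \<open>Mixed memories acting on l2\<close>

definition mm_trace :: "('a \<Rightarrow> 'a \<Rightarrow> complex) \<Rightarrow> real" where
  "mm_trace \<rho> = (\<Sum>\<^sub>\<infinity>a. Re (\<rho> a a))"

lemma mixed_memory_positive: "mixed_memory T \<Longrightarrow> positive_matrix T"
  unfolding mixed_memory_def by simp

lemma mixed_memory_diag_nonneg: "mixed_memory T \<Longrightarrow> 0 \<le> Re (T a a)"
  by (rule positive_matrix_diag(2)[OF mixed_memory_positive])

lemma mixed_memory_trace_has_sum:
  "mixed_memory T \<Longrightarrow> ((\<lambda>a. Re (T a a)) has_sum mm_trace T) UNIV"
  unfolding mixed_memory_def mm_trace_def by simp

lemma mm_trace_nonneg: "mixed_memory T \<Longrightarrow> 0 \<le> mm_trace T"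
  unfolding mm_trace_def by (simp add: infsum_nonneg mixed_memory_diag_nonneg)

lemma mixed_memory_zero: "mixed_memory (\<lambda>_ _. 0)"
  unfolding mixed_memory_def positive_matrix_def by simp

lemma mixed_memory_entry_le:
  assumes "mixed_memory T"
  shows "cmod (T a b) \<le> Re (T a a) + Re (T b b)"
  using positive_matrix_entry_le_mean[OF mixed_memory_positive[OF assms], of a b]
    mixed_memory_diag_nonneg[OF assms, of a] mixed_memory_diag_nonneg[OF assms, of b]
  by argo

lemma mm_has_sum_trace:
  assumes \<rho>: "\<And>i. mixed_memory (\<rho> i)" and \<sigma>: "mm_has_sum \<rho> UNIV \<sigma>"
  shows "((\<lambda>i. mm_trace (\<rho> i)) has_sum mm_trace \<sigma>) UNIV"
proof -
  have "((\<lambda>i. Re (\<rho> i a a)) has_sum Re (\<sigma> a a)) UNIV" for a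
    using \<sigma> unfolding mm_has_sum_def by (simp add: has_sum_Re)
  moreover have "((\<lambda>a. Re (\<sigma> a a)) has_sum mm_trace \<sigma>) UNIV"
    using \<sigma> unfolding mm_has_sum_def by (simp add: mixed_memory_trace_has_sum)
  ultimately have "((\<lambda>(a, i). Re (\<rho> i a a)) has_sum mm_trace \<sigma>) UNIV"
    by (rule has_sum_Sigma_nonneg) (rule mixed_memory_diag_nonneg[OF \<rho>])
  then have "((\<lambda>(i, a). Re (\<rho> i a a)) has_sum mm_trace \<sigma>) (UNIV \<times> UNIV)"
    by (subst has_sum_swap) (simp add: case_prod_unfold)
  then show ?thesis
    by (rule has_sum_SigmaD) (use mixed_memory_trace_has_sum[OF \<rho>] in auto)
qed

lemma l2_norm_nonneg: "0 \<le> l2_norm f"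
  unfolding l2_norm_def by (simp add: infsum_nonneg)

lemma l2_has_sum: "\<psi> \<in> l2 \<Longrightarrow> ((\<lambda>y. (cmod (\<psi> y))\<^sup>2) has_sum (l2_norm \<psi>)\<^sup>2) UNIV"
  unfolding l2_def l2_norm_def by (simp add: infsum_nonneg)

lemma mm_weight_has_sum_le:
  assumes T: "mixed_memory T" and \<psi>: "\<psi> \<in> l2"
  obtains K where "((\<lambda>y. sqrt (Re (T y y)) * cmod (\<psi> y)) has_sum K) UNIV"
    and "0 \<le> K" and "K \<le> (mm_trace T + (l2_norm \<psi>)\<^sup>2) / 2"
proof -
  have amgm: "sqrt (Re (T y y)) * cmod (\<psi> y) \<le> (Re (T y y) + (cmod (\<psi> y))\<^sup>2) / 2" for y
    using arith_geo_mean_sqrt[of "Re (T y y)" "(cmod (\<psi> y))\<^sup>2"] mixed_memory_diag_nonneg[OF T]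
    by (simp add: real_sqrt_mult)
  have bound: "((\<lambda>y. (Re (T y y) + (cmod (\<psi> y))\<^sup>2) / 2) has_sum
      (mm_trace T + (l2_norm \<psi>)\<^sup>2) / 2) UNIV"
    by (intro has_sum_divide_const has_sum_add mixed_memory_trace_has_sum T l2_has_sum \<psi>)
  have nonneg: "0 \<le> sqrt (Re (T y y)) * cmod (\<psi> y)" for y
    using mixed_memory_diag_nonneg[OF T] by simp
  have "(\<lambda>y. sqrt (Re (T y y)) * cmod (\<psi> y)) summable_on UNIV"
    using summable_on_comparison_test[OF has_sum_imp_summable[OF bound] amgm nonneg] .
  then have weight: "((\<lambda>y. sqrt (Re (T y y)) * cmod (\<psi> y)) has_sum
      (\<Sum>\<^sub>\<infinity>y. sqrt (Re (T y y)) * cmod (\<psi> y))) UNIV"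
    by simp
  show ?thesis
    by (rule that[OF weight has_sum_nonneg[OF weight nonneg] has_sum_mono[OF weight bound amgm]])
qed

lemma mm_row_abs_summable:
  assumes T: "mixed_memory T" and \<psi>: "\<psi> \<in> l2"
  shows "(\<lambda>y. norm (T x y * \<psi> y)) summable_on UNIV"
    and "norm (\<Sum>\<^sub>\<infinity>y. T x y * \<psi> y) \<le> sqrt (Re (T x x)) * (\<Sum>\<^sub>\<infinity>y. sqrt (Re (T y y)) * cmod (\<psi> y))"
proof -
  obtain K where K: "((\<lambda>y. sqrt (Re (T y y)) * cmod (\<psi> y)) has_sum K) UNIV"
    using mm_weight_has_sum_le[OF T \<psi>] by blast
  have le: "norm (T x y * \<psi> y) \<le> sqrt (Re (T x x)) * (sqrt (Re (T y y)) * cmod (\<psi> y))" for y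
    using mult_right_mono[OF positive_matrix_entry_le[OF mixed_memory_positive[OF T], of x y]]
    by (simp add: norm_mult mult.assoc)
  have dom: "((\<lambda>y. sqrt (Re (T x x)) * (sqrt (Re (T y y)) * cmod (\<psi> y))) has_sum
      sqrt (Re (T x x)) * K) UNIV"
    by (rule has_sum_cmult_right[OF K])
  show abs: "(\<lambda>y. norm (T x y * \<psi> y)) summable_on UNIV"
    by (rule Infinite_Sum.abs_summable_on_comparison_test'[OF has_sum_imp_summable[OF dom]])
      (use le in simp)
  have "norm (\<Sum>\<^sub>\<infinity>y. T x y * \<psi> y) \<le> (\<Sum>\<^sub>\<infinity>y. norm (T x y * \<psi> y))"
    by (rule norm_infsum_bound[OF abs])
  also have "\<dots> \<le> sqrt (Re (T x x)) * K"
    using has_sum_mono[OF has_sum_infsum[OF abs] dom le] .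
  finally show "norm (\<Sum>\<^sub>\<infinity>y. T x y * \<psi> y)
      \<le> sqrt (Re (T x x)) * (\<Sum>\<^sub>\<infinity>y. sqrt (Re (T y y)) * cmod (\<psi> y))"
    using K by (simp add: infsumI)
qed

lemma mm_apply_l2:
  assumes T: "mixed_memory T" and \<psi>: "\<psi> \<in> l2"
  shows "mm_apply T \<psi> \<in> l2"
    and "l2_norm (mm_apply T \<psi>) \<le> sqrt (mm_trace T) * ((mm_trace T + (l2_norm \<psi>)\<^sup>2) / 2)"
proof -
  obtain K where K: "((\<lambda>y. sqrt (Re (T y y)) * cmod (\<psi> y)) has_sum K) UNIV"
    and K0: "0 \<le> K" and K_le: "K \<le> (mm_trace T + (l2_norm \<psi>)\<^sup>2) / 2"
    using mm_weight_has_sum_le[OF T \<psi>] by blast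
  have pointwise: "(cmod (mm_apply T \<psi> x))\<^sup>2 \<le> Re (T x x) * K\<^sup>2" for x
  proof -
    have "cmod (mm_apply T \<psi> x) \<le> sqrt (Re (T x x)) * K"
      using mm_row_abs_summable(2)[OF T \<psi>, of x] K unfolding mm_apply_def by (simp add: infsumI)
    from power_mono[OF this norm_ge_zero, of 2] show ?thesis
      using mixed_memory_diag_nonneg[OF T] by (simp add: power_mult_distrib)
  qed
  have dom: "((\<lambda>x. Re (T x x) * K\<^sup>2) has_sum mm_trace T * K\<^sup>2) UNIV"
    by (rule has_sum_cmult_left[OF mixed_memory_trace_has_sum[OF T]])
  have sq: "(\<lambda>x. (cmod (mm_apply T \<psi> x))\<^sup>2) summable_on UNIV"
    by (rule summable_on_comparison_test[OF has_sum_imp_summable[OF dom] pointwise]) simp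
  then show "mm_apply T \<psi> \<in> l2" unfolding l2_def by simp
  have "(\<Sum>\<^sub>\<infinity>x. (cmod (mm_apply T \<psi> x))\<^sup>2) \<le> mm_trace T * K\<^sup>2"
    using has_sum_mono[OF has_sum_infsum[OF sq] dom pointwise] .
  then have "l2_norm (mm_apply T \<psi>) \<le> sqrt (mm_trace T * K\<^sup>2)"
    unfolding l2_norm_def by (rule real_sqrt_le_mono)
  also have "\<dots> = sqrt (mm_trace T) * K" using K0 by (simp add: real_sqrt_mult)
  also have "\<dots> \<le> sqrt (mm_trace T) * ((mm_trace T + (l2_norm \<psi>)\<^sup>2) / 2)"
    by (rule mult_left_mono[OF K_le]) (simp add: mm_trace_nonneg[OF T])
  finally show "l2_norm (mm_apply T \<psi>) \<le> sqrt (mm_trace T) * ((mm_trace T + (l2_norm \<psi>)\<^sup>2) / 2)" .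
qed

lemma mm_row_has_sum:
  assumes "mixed_memory T" "\<psi> \<in> l2"
  shows "((\<lambda>y. T x y * \<psi> y) has_sum mm_apply T \<psi> x) UNIV"
  unfolding mm_apply_def
  by (rule has_sum_infsum, rule abs_summable_summable, rule mm_row_abs_summable(1)[OF assms])

lemma mm_apply_add_sum:
  assumes S: "mixed_memory S" and G: "finite G" and R: "\<And>i. mixed_memory (R i)" and \<psi>: "\<psi> \<in> l2"
  shows "mm_apply (\<lambda>a b. S a b + (\<Sum>i\<in>G. R i a b)) \<psi> x = mm_apply S \<psi> x + (\<Sum>i\<in>G. mm_apply (R i) \<psi> x)"
proof -
  have "((\<lambda>y. S x y * \<psi> y + (\<Sum>i\<in>G. R i x y * \<psi> y)) has_sum
      mm_apply S \<psi> x + (\<Sum>i\<in>G. mm_apply (R i) \<psi> x)) UNIV"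
    by (intro has_sum_add has_sum_sum G mm_row_has_sum S R \<psi>)
  then show ?thesis
    unfolding mm_apply_def by (simp add: infsumI distrib_right sum_distrib_right)
qed

lemma predicate_sum:
  assumes A: "is_predicate A" and G: "finite G" and f: "\<And>i. i \<in> G \<Longrightarrow> f i \<in> A"
  shows "(\<lambda>x. \<Sum>i\<in>G. f i x) \<in> A"
  using G f
proof (induction G rule: finite_induct)
  case empty
  then show ?case using A unfolding is_predicate_def by simp
next
  case (insert j G)
  have add: "\<forall>g\<in>A. \<forall>h\<in>A. (\<lambda>x. g x + h x) \<in> A" using A unfolding is_predicate_def by blast
  have "(\<lambda>x. f j x + (\<Sum>i\<in>G. f i x)) \<in> A"
    using add[rule_format, of "f j" "\<lambda>x. \<Sum>i\<in>G. f i x"] insert by simp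
  then show ?case using insert by simp
qed

lemma predicate_limit:
  assumes A: "is_predicate A" and "f \<in> l2" and "\<And>n. F n \<in> A"
    and "(\<lambda>n. l2_norm (\<lambda>x. F n x - f x)) \<longlonglongrightarrow> 0"
  shows "f \<in> A"
proof -
  have "f \<in> l2_closure A" unfolding l2_closure_def using assms by blast
  then show ?thesis using A unfolding is_predicate_def by blast
qed

lemma l2_closure_mono: "S \<subseteq> T \<Longrightarrow> l2_closure S \<subseteq> l2_closure T"
  unfolding l2_closure_def by blast

lemma mm_apply_in_supp:
  assumes "mixed_memory T" "\<psi> \<in> l2"
  shows "mm_apply T \<psi> \<in> supp T"
proof -
  have "\<forall>n::nat. mm_apply T \<psi> \<in> mm_apply T ` l2" using assms(2) by blast
  moreover have "(\<lambda>n::nat. l2_norm (\<lambda>x. mm_apply T \<psi> x - mm_apply T \<psi> x)) \<longlonglongrightarrow> 0"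
    by (simp add: l2_norm_def)
  ultimately show ?thesis
    unfolding supp_def l2_closure_def using mm_apply_l2(1)[OF assms]
    by (intro CollectI conjI exI[of _ "\<lambda>_::nat. mm_apply T \<psi>"]) simp_all
qed

lemma supp_subset_predicate_iff:
  assumes A: "is_predicate A" and T: "mixed_memory T"
  shows "supp T \<subseteq> A \<longleftrightarrow> (\<forall>\<psi>\<in>l2. mm_apply T \<psi> \<in> A)"
proof
  show "\<forall>\<psi>\<in>l2. mm_apply T \<psi> \<in> A" if "supp T \<subseteq> A"
    using that mm_apply_in_supp[OF T] by blast
next
  assume "\<forall>\<psi>\<in>l2. mm_apply T \<psi> \<in> A"
  then have "supp T \<subseteq> l2_closure A" unfolding supp_def by (intro l2_closure_mono) blast
  then show "supp T \<subseteq> A" using A unfolding is_predicate_def by blast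
qed

section \<open>Families of mixed memories with summable traces\<close>

definition mm_infsum :: "('i \<Rightarrow> 'a \<Rightarrow> 'a \<Rightarrow> complex) \<Rightarrow> 'a \<Rightarrow> 'a \<Rightarrow> complex" where
  "mm_infsum R = (\<lambda>a b. \<Sum>\<^sub>\<infinity>i. R i a b)"

lemma mm_has_sum_imp_infsum: "mm_has_sum R UNIV \<sigma> \<Longrightarrow> mm_infsum R = \<sigma>"
  unfolding mm_has_sum_def mm_infsum_def by (intro ext) (simp add: infsumI)

locale trace_summable_family =
  fixes R :: "'i \<Rightarrow> 'a \<Rightarrow> 'a \<Rightarrow> complex"
  assumes mixed: "\<And>i. mixed_memory (R i)"
    and trace_summable: "(\<lambda>i. mm_trace (R i)) summable_on UNIV"
begin

lemma diag_has_sum: "((\<lambda>(a, i). Re (R i a a)) has_sum (\<Sum>\<^sub>\<infinity>i. mm_trace (R i))) UNIV"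
proof -
  have "((\<lambda>(i, a). Re (R i a a)) has_sum (\<Sum>\<^sub>\<infinity>i. mm_trace (R i))) UNIV"
    by (rule has_sum_Sigma_nonneg[OF mixed_memory_trace_has_sum[OF mixed]
          has_sum_infsum[OF trace_summable] mixed_memory_diag_nonneg[OF mixed]])
  then show ?thesis
    using has_sum_swap[of "\<lambda>(i, a). Re (R i a a)" UNIV UNIV] by (simp add: case_prod_unfold)
qed

lemma diag_summable_on_pairs: "(\<lambda>(a, i). Re (R i a a)) summable_on UNIV"
  using diag_has_sum by (rule has_sum_imp_summable)

lemma diag_summable: "(\<lambda>i. Re (R i a a)) summable_on UNIV"
  using summable_on_SigmaD1[of "\<lambda>a i. Re (R i a a)" UNIV "\<lambda>_. UNIV" a] diag_summable_on_pairs
  by simp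

lemma diag_summable_along:
  assumes p: "inj p"
  shows "(\<lambda>(c, i). Re (R i (p c) (p c))) summable_on UNIV"
proof -
  have inj: "inj (\<lambda>(c, i). (p c, i))" using p by (auto simp: inj_def)
  have "(\<lambda>(a, i). Re (R i a a)) summable_on range (\<lambda>(c, i). (p c, i))"
    by (rule summable_on_subset[OF diag_summable_on_pairs]) simp
  then show ?thesis
    by (subst (asm) summable_on_reindex[OF inj]) (simp add: o_def case_prod_unfold)
qed

lemma entries_summable_along:
  assumes p: "inj p" and q: "inj q"
  shows "(\<lambda>(c, i). R i (p c) (q c)) summable_on UNIV"
proof -
  have "((\<lambda>(c, i). Re (R i (p c) (p c)) + Re (R i (q c) (q c)))) summable_on UNIV"
    using summable_on_add[OF diag_summable_along[OF p] diag_summable_along[OF q]]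
    by (simp add: case_prod_unfold)
  then have "(\<lambda>x. norm ((\<lambda>(c, i). R i (p c) (q c)) x)) summable_on UNIV"
    by (rule summable_on_comparison_test) (auto simp: mixed_memory_entry_le[OF mixed])
  then show ?thesis by (rule abs_summable_summable)
qed

lemma entries_summable: "(\<lambda>i. R i a b) summable_on UNIV"
proof -
  have "(\<lambda>i. Re (R i a a) + Re (R i b b)) summable_on UNIV"
    by (rule summable_on_add[OF diag_summable diag_summable])
  then have "(\<lambda>i. norm (R i a b)) summable_on UNIV"
    by (rule summable_on_comparison_test) (auto simp: mixed_memory_entry_le[OF mixed])
  then show ?thesis by (rule abs_summable_summable)
qed

lemma mixed_memory_infsum: "mixed_memory (mm_infsum R)"
  unfolding mixed_memory_def
proof
  show "positive_matrix (mm_infsum R)"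
    unfolding mm_infsum_def
    by (rule positive_matrix_has_sum[of UNIV R])
      (use mixed_memory_positive[OF mixed] has_sum_infsum[OF entries_summable] in auto)
  have "(\<lambda>a. \<Sum>\<^sub>\<infinity>i. Re (R i a a)) summable_on UNIV"
    using summable_on_SigmaD[of "\<lambda>(a, i). Re (R i a a)" UNIV "\<lambda>_. UNIV"]
      diag_summable_on_pairs diag_summable
    by simp
  then show "(\<lambda>a. Re (mm_infsum R a a)) summable_on UNIV"
    unfolding mm_infsum_def by (simp add: infsum_Re[OF entries_summable])
qed

lemma mm_has_sum_infsum: "mm_has_sum R UNIV (mm_infsum R)"
  using mixed_memory_infsum entries_summable unfolding mm_has_sum_def by (simp add: mm_infsum_def)

lemma trace_has_sum: "((\<lambda>i. mm_trace (R i)) has_sum mm_trace (mm_infsum R)) UNIV"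
  by (rule mm_has_sum_trace[OF mixed mm_has_sum_infsum])

lemma mm_trace_restrict:
  "mm_trace (\<lambda>a b. if i \<in> G then 0 else R i a b) = (if i \<in> G then 0 else mm_trace (R i))"
  by (simp add: mm_trace_def)

lemma restrict: "trace_summable_family (\<lambda>i a b. if i \<in> G then 0 else R i a b)"
proof
  show "mixed_memory (\<lambda>a b. if i \<in> G then 0 else R i a b)" for i
    by (cases "i \<in> G") (simp_all add: mixed mixed_memory_zero)
  have "(\<lambda>i. if i \<in> G then 0 else mm_trace (R i)) summable_on UNIV"
    by (rule summable_on_comparison_test[OF trace_summable]) (auto simp: mm_trace_nonneg[OF mixed])
  then show "(\<lambda>i. mm_trace (\<lambda>a b. if i \<in> G then 0 else R i a b)) summable_on UNIV"
    by (simp only: mm_trace_restrict)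
qed

lemma infsum_restrict:
  assumes "finite G"
  shows "mm_infsum R a b = mm_infsum (\<lambda>i a b. if i \<in> G then 0 else R i a b) a b + (\<Sum>i\<in>G. R i a b)"
proof -
  have "((\<lambda>i. if i \<in> G then 0 else R i a b) has_sum mm_infsum R a b - (\<Sum>i\<in>G. R i a b)) UNIV"
    unfolding mm_infsum_def
    by (rule has_sum_restrict_finite[OF has_sum_infsum[OF entries_summable] assms])
  then show ?thesis
    unfolding mm_infsum_def by (simp add: infsumI)
qed

lemma trace_restrict:
  assumes "finite G"
  shows "mm_trace (mm_infsum (\<lambda>i a b. if i \<in> G then 0 else R i a b))
    = mm_trace (mm_infsum R) - (\<Sum>i\<in>G. mm_trace (R i))"
proof -
  have "((\<lambda>i. if i \<in> G then 0 else mm_trace (R i)) has_sum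
      mm_trace (mm_infsum (\<lambda>i a b. if i \<in> G then 0 else R i a b))) UNIV"
    using trace_summable_family.trace_has_sum[OF restrict] by (simp only: mm_trace_restrict)
  with has_sum_restrict_finite[OF trace_has_sum assms] show ?thesis
    using has_sum_unique by blast
qed

lemma tails_trace_tendsto_zero:
  obtains G where "\<And>n. finite (G n)"
    and "(\<lambda>n. mm_trace (mm_infsum (\<lambda>i a b. if i \<in> G n then 0 else R i a b))) \<longlonglongrightarrow> 0"
proof -
  obtain G where G: "\<And>n. finite (G n)"
    and partial: "(\<lambda>n. \<Sum>i\<in>G n. mm_trace (R i)) \<longlonglongrightarrow> mm_trace (mm_infsum R)"
    using has_sum_finite_subsets_seq[OF trace_has_sum] by metis
  have "(\<lambda>n. mm_trace (mm_infsum R) - (\<Sum>i\<in>G n. mm_trace (R i))) \<longlonglongrightarrow> 0"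
    using tendsto_diff[OF tendsto_const[of "mm_trace (mm_infsum R)"] partial] by simp
  then have "(\<lambda>n. mm_trace (mm_infsum (\<lambda>i a b. if i \<in> G n then 0 else R i a b))) \<longlonglongrightarrow> 0"
    by (simp add: trace_restrict[OF G])
  with G show ?thesis by (rule that)
qed

lemma mm_apply_infsum_restrict:
  assumes "finite G" and "\<psi> \<in> l2"
  shows "mm_apply (mm_infsum R) \<psi> x
    = mm_apply (mm_infsum (\<lambda>i a b. if i \<in> G then 0 else R i a b)) \<psi> x + (\<Sum>i\<in>G. mm_apply (R i) \<psi> x)"
proof -
  have "mm_infsum R
      = (\<lambda>a b. mm_infsum (\<lambda>i a b. if i \<in> G then 0 else R i a b) a b + (\<Sum>i\<in>G. R i a b))"
    by (intro ext) (rule infsum_restrict[OF assms(1)])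
  then show ?thesis
    using mm_apply_add_sum[OF trace_summable_family.mixed_memory_infsum[OF restrict]
        assms(1) mixed assms(2)]
    by simp
qed

lemma supp_infsum_subset:
  assumes A: "is_predicate A" and supp: "\<And>i. supp (R i) \<subseteq> A"
  shows "supp (mm_infsum R) \<subseteq> A"
  unfolding supp_subset_predicate_iff[OF A mixed_memory_infsum]
proof
  fix \<psi> :: "'a \<Rightarrow> complex"
  assume \<psi>: "\<psi> \<in> l2"
  obtain G where G: "\<And>n. finite (G n)"
    and tail_trace: "(\<lambda>n. mm_trace (mm_infsum (\<lambda>i a b. if i \<in> G n then 0 else R i a b))) \<longlonglongrightarrow> 0"
    using tails_trace_tendsto_zero by blast
  define tail where "tail n = mm_infsum (\<lambda>i a b. if i \<in> G n then 0 else R i a b)" for n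
  have tail_mixed: "mixed_memory (tail n)" for n
    unfolding tail_def by (rule trace_summable_family.mixed_memory_infsum[OF restrict])
  define F where "F n = (\<lambda>x. \<Sum>i\<in>G n. mm_apply (R i) \<psi> x)" for n
  have FA: "F n \<in> A" for n
    unfolding F_def using supp supp_subset_predicate_iff[OF A mixed] \<psi>
    by (intro predicate_sum[OF A G]) blast
  have dist: "l2_norm (\<lambda>x. F n x - mm_apply (mm_infsum R) \<psi> x) = l2_norm (mm_apply (tail n) \<psi>)"
    for n
    unfolding F_def tail_def mm_apply_infsum_restrict[OF G[of n] \<psi>] by (simp add: l2_norm_def)
  have "(\<lambda>n. sqrt (mm_trace (tail n)) * ((mm_trace (tail n) + (l2_norm \<psi>)\<^sup>2) / 2)) \<longlonglongrightarrow> 0"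
    using tail_trace unfolding tail_def[symmetric] by (auto intro!: tendsto_eq_intros)
  then have "(\<lambda>n. l2_norm (\<lambda>x. F n x - mm_apply (mm_infsum R) \<psi> x)) \<longlonglongrightarrow> 0"
    by (rule Lim_null_comparison[rotated])
      (use dist mm_apply_l2(2)[OF tail_mixed \<psi>]
        in \<open>auto intro!: always_eventually simp: l2_norm_nonneg\<close>)
  then show "mm_apply (mm_infsum R) \<psi> \<in> A"
    by (rule predicate_limit[OF A mm_apply_l2(1)[OF mixed_memory_infsum \<psi>] FA])
qed

end

section \<open>Partial trace and separability of the sum\<close>

lemma mm_trace_ptrace_EU:
  fixes R :: "(('x \<times> 'e) \<times> 'u) \<Rightarrow> (('x \<times> 'e) \<times> 'u) \<Rightarrow> complex"
  assumes R: "mixed_memory R"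
  shows "mm_trace (ptrace_EU R) = mm_trace R"
proof -
  define d where "d x eu = Re (R ((x, fst eu), snd eu) ((x, fst eu), snd eu))" for x eu
  have bij: "bij_betw (\<lambda>(x, eu). ((x, fst eu), snd eu)) UNIV (UNIV :: (('x \<times> 'e) \<times> 'u) set)"
    by (rule bij_betwI[of _ _ _ "\<lambda>((x, e), u). (x, (e, u))"]) auto
  have d: "((\<lambda>(x, eu). d x eu) has_sum mm_trace R) UNIV"
    using has_sum_reindex_bij_betw[OF bij, of "\<lambda>a. Re (R a a)"] mixed_memory_trace_has_sum[OF R]
    by (simp add: d_def case_prod_unfold)
  have "Re (ptrace_EU R x x) = (\<Sum>\<^sub>\<infinity>eu. d x eu)" for x
  proof -
    have s: "(\<lambda>eu. d x eu) summable_on UNIV"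
      using summable_on_SigmaD1[of d UNIV "\<lambda>_. UNIV" x] has_sum_imp_summable[OF d] by simp
    moreover have "ptrace_EU R x x = (\<Sum>\<^sub>\<infinity>eu. of_real (d x eu))"
      unfolding ptrace_EU_def d_def case_prod_unfold
      using positive_matrix_diag(1)[OF mixed_memory_positive[OF R]] by metis
    ultimately show ?thesis
      using infsum_Re[OF summable_on_of_real[OF s, where 'a = complex]] by simp
  qed
  moreover have "((\<lambda>x. \<Sum>\<^sub>\<infinity>eu. d x eu) has_sum mm_trace R) UNIV"
    by (rule has_sum_Sigma'[where f = "\<lambda>(x, eu). d x eu"])
      (use d has_sum_infsum summable_on_SigmaD1[of d UNIV "\<lambda>_. UNIV"] has_sum_imp_summable[OF d]
        in auto)
  ultimately show ?thesis unfolding mm_trace_def by (simp add: infsumI)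
qed

lemma ptrace_EU_infsum:
  fixes R :: "'i \<Rightarrow> (('x \<times> 'e) \<times> 'u) \<Rightarrow> (('x \<times> 'e) \<times> 'u) \<Rightarrow> complex"
  assumes "trace_summable_family R"
  shows "ptrace_EU (mm_infsum R) = mm_infsum (\<lambda>i. ptrace_EU (R i))"
proof (intro ext)
  fix x x' :: 'x
  define p where "p x eu = ((x, fst eu), snd eu)" for x :: 'x and eu :: "'e \<times> 'u"
  have inj: "inj (p x)" for x unfolding p_def by (auto simp: inj_def)
  have "ptrace_EU (mm_infsum R) x x' = (\<Sum>\<^sub>\<infinity>eu. \<Sum>\<^sub>\<infinity>i. R i (p x eu) (p x' eu))"
    unfolding ptrace_EU_def mm_infsum_def p_def by (simp add: case_prod_unfold)
  also have "\<dots> = (\<Sum>\<^sub>\<infinity>i. \<Sum>\<^sub>\<infinity>eu. R i (p x eu) (p x' eu))"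
    by (rule infsum_swap_banach)
      (use trace_summable_family.entries_summable_along[OF assms inj inj] in simp)
  also have "\<dots> = mm_infsum (\<lambda>i. ptrace_EU (R i)) x x'"
    unfolding ptrace_EU_def mm_infsum_def p_def by (simp add: case_prod_unfold)
  finally show "ptrace_EU (mm_infsum R) x x' = mm_infsum (\<lambda>i. ptrace_EU (R i)) x x'" .
qed

lemma tensor_diag:
  assumes P: "mixed_memory P" and Q: "mixed_memory Q"
  shows "Re (tensor P Q a a) = Re (P (fst a) (fst a)) * Re (Q (snd a) (snd a))"
    and "0 \<le> Re (tensor P Q a a)"
proof -
  have "tensor P Q a a = of_real (Re (P (fst a) (fst a))) * of_real (Re (Q (snd a) (snd a)))"
    unfolding tensor_def case_prod_unfold
    using positive_matrix_diag(1)[OF mixed_memory_positive[OF P]]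
      positive_matrix_diag(1)[OF mixed_memory_positive[OF Q]] by metis
  then show "Re (tensor P Q a a) = Re (P (fst a) (fst a)) * Re (Q (snd a) (snd a))"
    by (simp flip: of_real_mult)
  then show "0 \<le> Re (tensor P Q a a)"
    by (simp add: mixed_memory_diag_nonneg[OF P] mixed_memory_diag_nonneg[OF Q])
qed

lemma tensor_entry_le:
  assumes P: "mixed_memory P" and Q: "mixed_memory Q"
  shows "cmod (tensor P Q a b) \<le> Re (tensor P Q a a) + Re (tensor P Q b b)"
proof -
  obtain v w v' w' where ab: "a = (v, w)" "b = (v', w')" by fastforce
  define x y where "x = Re (P v v) * Re (Q w w)" and "y = Re (P v' v') * Re (Q w' w')"
  have "0 \<le> x" "0 \<le> y"
    unfolding x_def y_def
    by (simp_all add: mixed_memory_diag_nonneg[OF P] mixed_memory_diag_nonneg[OF Q])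
  have "cmod (tensor P Q a b) = cmod (P v v') * cmod (Q w w')"
    unfolding ab tensor_def by (simp add: norm_mult)
  also have "\<dots>
      \<le> (sqrt (Re (P v v)) * sqrt (Re (P v' v'))) * (sqrt (Re (Q w w)) * sqrt (Re (Q w' w')))"
    by (intro mult_mono positive_matrix_entry_le mixed_memory_positive P Q)
      (simp_all add: mixed_memory_diag_nonneg[OF P])
  also have "\<dots> = sqrt (x * y)"
    unfolding x_def y_def by (simp add: real_sqrt_mult)
  also have "\<dots> \<le> (x + y) / 2" by (rule arith_geo_mean_sqrt) fact+
  also have "\<dots> \<le> x + y" using \<open>0 \<le> x\<close> \<open>0 \<le> y\<close> by simp
  finally show ?thesis unfolding x_def y_def ab tensor_diag(1)[OF P Q] by simp
qed

lemma tensor_family_has_sum: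
  fixes P :: "'i \<times> 'n \<Rightarrow> 'v \<Rightarrow> 'v \<Rightarrow> complex" and Q :: "'i \<times> 'n \<Rightarrow> 'w \<Rightarrow> 'w \<Rightarrow> complex"
  assumes R: "trace_summable_family R"
    and P: "\<And>k. mixed_memory (P k)" and Q: "\<And>k. mixed_memory (Q k)"
    and sums: "\<And>i. mm_has_sum (\<lambda>n. tensor (P (i, n)) (Q (i, n))) UNIV (R i)"
  shows "((\<lambda>k. tensor (P k) (Q k) a b) has_sum mm_infsum R a b) UNIV"
proof -
  define \<tau> where "\<tau> k = tensor (P k) (Q k)" for k
  have \<tau>_sums: "((\<lambda>n. \<tau> (i, n) a b) has_sum R i a b) UNIV" for i a b
    using sums unfolding mm_has_sum_def \<tau>_def by blast
  have diag: "(\<lambda>k. Re (\<tau> k a a)) summable_on UNIV" for a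
  proof -
    have "((\<lambda>(i, n). Re (\<tau> (i, n) a a)) has_sum (\<Sum>\<^sub>\<infinity>i. Re (R i a a))) UNIV"
      by (rule has_sum_Sigma_nonneg[OF has_sum_Re[OF \<tau>_sums]
            has_sum_infsum[OF trace_summable_family.diag_summable[OF R]]])
        (simp add: \<tau>_def tensor_diag(2)[OF P Q])
    then show ?thesis by (simp add: has_sum_imp_summable case_prod_unfold)
  qed
  have "(\<lambda>k. norm (\<tau> k a b)) summable_on UNIV"
    by (rule summable_on_comparison_test[OF summable_on_add[OF diag[of a] diag[of b]]])
      (simp_all add: \<tau>_def tensor_entry_le[OF P Q])
  then have summable: "(\<lambda>k. \<tau> k a b) summable_on UNIV"
    by (rule abs_summable_summable)
  have "(\<Sum>\<^sub>\<infinity>k. \<tau> k a b) = (\<Sum>\<^sub>\<infinity>i. \<Sum>\<^sub>\<infinity>n. \<tau> (i, n) a b)"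
    using infsum_Sigma_banach[of "\<lambda>k. \<tau> k a b" UNIV "\<lambda>_. UNIV"] summable by simp
  also have "\<dots> = mm_infsum R a b"
    unfolding mm_infsum_def by (simp add: infsumI[OF \<tau>_sums])
  finally show ?thesis
    using has_sum_infsum[OF summable] unfolding \<tau>_def by simp
qed

lemma tensor_has_sum_countable_support:
  fixes P :: "'k \<Rightarrow> 'v \<Rightarrow> 'v \<Rightarrow> complex" and Q :: "'k \<Rightarrow> 'w \<Rightarrow> 'w \<Rightarrow> complex"
  assumes P: "\<And>k. mixed_memory (P k)" and Q: "\<And>k. mixed_memory (Q k)"
    and \<Omega>: "mixed_memory \<Omega>" and sums: "\<And>a b. ((\<lambda>k. tensor (P k) (Q k) a b) has_sum \<Omega> a b) UNIV"
  obtains S where "countable S" and "\<And>k a b. k \<notin> S \<Longrightarrow> tensor (P k) (Q k) a b = 0"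
proof -
  define \<tau> where "\<tau> k = tensor (P k) (Q k)" for k
  define S where "S = {k. \<exists>a. Re (\<tau> k a a) \<noteq> 0}"
  have diag: "((\<lambda>k. Re (\<tau> k a a)) has_sum Re (\<Omega> a a)) UNIV" for a
    using has_sum_Re[OF sums] unfolding \<tau>_def .
  have \<tau>_nonneg: "0 \<le> Re (\<tau> k a a)" for k a
    unfolding \<tau>_def by (rule tensor_diag(2)[OF P Q])
  \<comment> \<open>a nonzero term has a nonzero diagonal entry, which is then nonzero in \<open>\<Omega>\<close> as well\<close>
  have support: "S \<subseteq> (\<Union>a\<in>{a. Re (\<Omega> a a) \<noteq> 0}. {k. Re (\<tau> k a a) \<noteq> 0})"
  proof
    fix k assume "k \<in> S"
    then obtain a where a: "Re (\<tau> k a a) \<noteq> 0" unfolding S_def by blast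
    have "Re (\<tau> k a a) \<le> Re (\<Omega> a a)"
      using finite_sum_le_has_sum[OF diag, of "{k}"] \<tau>_nonneg by simp
    then have "Re (\<Omega> a a) \<noteq> 0" using a \<tau>_nonneg[of k a] by linarith
    then show "k \<in> (\<Union>a\<in>{a. Re (\<Omega> a a) \<noteq> 0}. {k. Re (\<tau> k a a) \<noteq> 0})"
      using a by blast
  qed
  have "countable {a. Re (\<Omega> a a) \<noteq> 0}"
    using summable_countable_real[OF has_sum_imp_summable[OF mixed_memory_trace_has_sum[OF \<Omega>]]]
    by simp
  moreover have "countable {k. Re (\<tau> k a a) \<noteq> 0}" for a
    using summable_countable_real[OF has_sum_imp_summable[OF diag]] by simp
  ultimately have "countable S"
    by (intro countable_subset[OF support] countable_UN)
  moreover have "\<tau> k a b = 0" if "k \<notin> S" for k a b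
  proof -
    have "Re (\<tau> k a a) = 0" "Re (\<tau> k b b) = 0" using that unfolding S_def by blast+
    then show ?thesis using tensor_entry_le[OF P[of k] Q[of k], of a b] unfolding \<tau>_def by simp
  qed
  ultimately show ?thesis unfolding \<tau>_def by (rule that)
qed

lemma separable_if_tensor_has_sum:
  fixes P :: "'k \<Rightarrow> 'v \<Rightarrow> 'v \<Rightarrow> complex" and Q :: "'k \<Rightarrow> 'w \<Rightarrow> 'w \<Rightarrow> complex"
  assumes P: "\<And>k. mixed_memory (P k)" and Q: "\<And>k. mixed_memory (Q k)"
    and \<Omega>: "mixed_memory \<Omega>" and sums: "\<And>a b. ((\<lambda>k. tensor (P k) (Q k) a b) has_sum \<Omega> a b) UNIV"
  shows "separable \<Omega>"
proof -
  obtain S where S: "countable S" and outside: "\<And>k a b. k \<notin> S \<Longrightarrow> tensor (P k) (Q k) a b = 0"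
    using tensor_has_sum_countable_support[OF P Q \<Omega> sums] by blast
  obtain f :: "nat \<Rightarrow> 'k" and C where f: "bij_betw f C S" using S by (rule countableE_bij)
  define P' where "P' m = (if m \<in> C then P (f m) else (\<lambda>_ _. 0))" for m
  define Q' where "Q' m = (if m \<in> C then Q (f m) else (\<lambda>_ _. 0))" for m
  have "((\<lambda>m. tensor (P' m) (Q' m) a b) has_sum \<Omega> a b) UNIV" for a b
  proof -
    have "((\<lambda>k. tensor (P k) (Q k) a b) has_sum \<Omega> a b) S"
      using sums[of a b] outside by (subst has_sum_cong_neutral[where T = UNIV]) auto
    then have "((\<lambda>m. tensor (P (f m)) (Q (f m)) a b) has_sum \<Omega> a b) C"
      by (subst has_sum_reindex_bij_betw[OF f])
    then show ?thesis
      unfolding P'_def Q'_def tensor_def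
      by (subst has_sum_cong_neutral[where T = C]) (auto simp: case_prod_unfold)
  qed
  moreover have "mixed_memory (P' m) \<and> mixed_memory (Q' m)" for m
    unfolding P'_def Q'_def by (simp add: P Q mixed_memory_zero)
  ultimately show ?thesis
    unfolding separable_def mm_has_sum_def using \<Omega> by blast
qed

theorem lemma13:
  fixes A :: "((('x \<times> 'e) \<times> 'u) \<Rightarrow> complex) set"
    and \<rho> :: "'i \<Rightarrow> 'x \<Rightarrow> 'x \<Rightarrow> complex"
    and \<sigma> :: "'x \<Rightarrow> 'x \<Rightarrow> complex"
  assumes "is_predicate A"
    and "\<forall>i. mixed_memory (\<rho> i)"
    and "\<forall>i. satisfies (\<rho> i) A"
    and "mm_has_sum \<rho> UNIV \<sigma>"
  shows "satisfies \<sigma> A"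
proof -
  obtain R :: "'i \<Rightarrow> (('x \<times> 'e) \<times> 'u) \<Rightarrow> (('x \<times> 'e) \<times> 'u) \<Rightarrow> complex"
    where mixed: "\<And>i. mixed_memory (R i)" and sep: "\<And>i. separable (R i)"
      and supp: "\<And>i. supp (R i) \<subseteq> A" and ptrace: "\<And>i. ptrace_EU (R i) = \<rho> i"
    using assms(3) unfolding satisfies_def by metis
  obtain P :: "'i \<Rightarrow> nat \<Rightarrow> ('x \<times> 'e) \<Rightarrow> ('x \<times> 'e) \<Rightarrow> complex" and Q :: "'i \<Rightarrow> nat \<Rightarrow> 'u \<Rightarrow> 'u \<Rightarrow> complex"
    where PQ: "\<And>i n. mixed_memory (P i n) \<and> mixed_memory (Q i n)"
      and sums: "\<And>i. mm_has_sum (\<lambda>n. tensor (P i n) (Q i n)) UNIV (R i)"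
    using sep unfolding separable_def by metis
  have fam: "trace_summable_family R"
  proof
    show "(\<lambda>i. mm_trace (R i)) summable_on UNIV"
      using has_sum_imp_summable[OF mm_has_sum_trace[OF _ assms(4)]] assms(2)
      by (simp add: mm_trace_ptrace_EU[OF mixed, symmetric] ptrace)
  qed (rule mixed)
  have "ptrace_EU (mm_infsum R) = \<sigma>"
    unfolding ptrace_EU_infsum[OF fam] ptrace by (rule mm_has_sum_imp_infsum[OF assms(4)])
  moreover have "separable (mm_infsum R)"
    using PQ tensor_family_has_sum[OF fam, of "case_prod P" "case_prod Q"] sums
    by (intro separable_if_tensor_has_sum[of "case_prod P" "case_prod Q"]
        trace_summable_family.mixed_memory_infsum[OF fam]) auto
  ultimately show ?thesis
    unfolding satisfies_def
    by (intro exI[of _ "mm_infsum R"] conjI trace_summable_family.mixed_memory_infsum[OF fam]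
        trace_summable_family.supp_infsum_subset[OF fam assms(1) supp])
qed

end
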